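(* Consider $\min_u F(u)+G(u)$ under the assumptions below, and let $\{(y^t,z^t,x^t)\}$ be generated by the modified PR iteration with $\gamma\in(0,\frac{1}{12L_F})$. Then the sequence is bounded, and any cluster point $(\bar y,\bar z,\bar x)$ satisfies $\bar y=\bar z$ and $0\in\nabla F(\bar z)+\partial G(\bar z)$.
   Context: Assumptions: $F:\mathbb{R}^n\to\mathbb{R}$ is convex and differentiable with $\nabla F$ Lipschitz continuous with modulus at most $L_F>0$; $G:\mathbb{R}^n\to(-\infty,\infty]$ is proper, lower semicontinuous, and $\operatorname{Argmin}_u\{\tau G(u)+\frac12\|u-w\|^2\}$ is nonempty for every $w$ and every $\tau>0$; $F+G$ is coercive ($\liminf_{\|u\|\to\infty}(F+G)(u)=\infty$). Modified PR iteration: given $x^0$ and $\gamma\in(0,\frac1{12L_F})$, for $t=0,1,\dots$: $y^{t+1}=\operatorname{argmin}_y\{F(y)+\frac{5L_F}{2}\|y\|^2+\frac1{2\gamma}\|y-x^t\|^2\}$; $z^{t+1}\in\operatorname{Argmin}_z\{G(z)-\frac{5L_F}{2}\|z\|^2+\frac1{2\gamma}\|2y^{t+1}-x^t-z\|^2\}$; $x^{t+1}=x^t+2(z^{t+1}-y^{t+1})$. $\partial G$ is the limiting subdifferential: $v\in\partial G(x)$ iff there exist $x^t\to x$ with $G(x^t)\to G(x)$ and $v^t\to v$ such that $\liminf_{z\to x^t, z\ne x^t}\frac{G(z)-G(x^t)-\langle v^t,z-x^t\rangle}{\|z-x^t\|}\ge0$ for each $t$. *)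

theory Defs
  imports "HOL-Analysis.Analysis"
begin

text \<open>Extended-real-valued functions model maps into (-infinity, +infinity].\<close>

definition proper_fun :: "('a \<Rightarrow> ereal) \<Rightarrow> bool" where
  "proper_fun G \<longleftrightarrow> (\<forall>x. G x \<noteq> -\<infinity>) \<and> (\<exists>x. G x \<noteq> \<infinity>)"

definition lsc_fun :: "('a::topological_space \<Rightarrow> ereal) \<Rightarrow> bool" where
  "lsc_fun G \<longleftrightarrow> (\<forall>x. G x \<le> Liminf (at x) G)"

definition Argmin :: "('a \<Rightarrow> 'b::linorder) \<Rightarrow> 'a set" where
  "Argmin f = {x. \<forall>y. f x \<le> f y}"

definition frechet_subdiff :: "('a::euclidean_space \<Rightarrow> ereal) \<Rightarrow> 'a \<Rightarrow> 'a set" where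
  "frechet_subdiff G x = {v. \<bar>G x\<bar> \<noteq> \<infinity> \<and>
     Liminf (at x) (\<lambda>z. (G z - G x - ereal (v \<bullet> (z - x))) / ereal (norm (z - x))) \<ge> 0}"

definition limiting_subdiff :: "('a::euclidean_space \<Rightarrow> ereal) \<Rightarrow> 'a \<Rightarrow> 'a set" where
  "limiting_subdiff G x = {v. \<exists>xs vs. xs \<longlonglongrightarrow> x \<and> (\<lambda>t. G (xs t)) \<longlonglongrightarrow> G x \<and>
     vs \<longlonglongrightarrow> v \<and> (\<forall>t. vs t \<in> frechet_subdiff G (xs t))}"

end

theory Submission
  imports Defs
begin

text \<open>The analysis rests on the merit function
  \<open>M\<^sub>t = F y\<^sub>t + \<langle>\<nabla>F y\<^sub>t, z\<^sub>t - y\<^sub>t\<rangle> + (1/(2\<gamma>) - 5L/2) \<parallel>z\<^sub>t - y\<^sub>t\<parallel>\<^sup>2 + G z\<^sub>t\<close>,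
  which decreases by at least \<open>L \<parallel>y\<^sub>t\<^sub>+\<^sub>1 - y\<^sub>t\<parallel>\<^sup>2\<close> per step as long as \<open>\<gamma> < 1/(12L)\<close>.
  Since \<open>F + G\<close> is coercive and lower semicontinuous, hence bounded below, \<open>M\<close> converges,
  the iterates stay bounded and the successive differences of \<open>y\<close> vanish; by the
  optimality condition of the \<open>y\<close>-update so do those of \<open>x\<close>, and
  \<open>x\<^sub>t\<^sub>+\<^sub>1 - x\<^sub>t = 2 (z\<^sub>t\<^sub>+\<^sub>1 - y\<^sub>t\<^sub>+\<^sub>1)\<close> forces \<open>y\<close> and \<open>z\<close> to share cluster points.
  The optimality condition of the \<open>z\<close>-update exhibits a Frechet subgradient of \<open>G\<close> at
  \<open>z\<^sub>t\<^sub>+\<^sub>1\<close> converging to \<open>-\<nabla>F z\<close>, and lower semicontinuity together with the minimality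
  of \<open>z\<^sub>t\<^sub>+\<^sub>1\<close> gives \<open>G z\<^sub>t\<^sub>+\<^sub>1 \<longrightarrow> G z\<close> along the subsequence.\<close>

lemma convex_on_gradient_inequality:
  fixes F :: "'a::euclidean_space \<Rightarrow> real"
  assumes cv: "convex_on UNIV F"
    and dF: "\<And>u. (F has_derivative (\<lambda>h. gradF u \<bullet> h)) (at u)"
  shows "F u + gradF u \<bullet> (v - u) \<le> F v"
proof -
  define \<phi> where "\<phi> s = F (u + s *\<^sub>R (v - u))" for s :: real
  have "convex_on UNIV \<phi>"
  proof (rule convex_onI)
    fix t s1 s2 :: real assume t: "0 < t" "t < 1"
    have "u + ((1 - t) * s1 + t * s2) *\<^sub>R (v - u)
        = (1 - t) *\<^sub>R (u + s1 *\<^sub>R (v - u)) + t *\<^sub>R (u + s2 *\<^sub>R (v - u))"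
      by (simp add: algebra_simps)
    then show "\<phi> ((1 - t) *\<^sub>R s1 + t *\<^sub>R s2) \<le> (1 - t) * \<phi> s1 + t * \<phi> s2"
      unfolding \<phi>_def using convex_onD[OF cv, of t] t by simp
  qed simp
  moreover have "(\<phi> has_field_derivative (gradF u \<bullet> (v - u))) (at 0 within UNIV)"
  proof -
    have "((\<lambda>s. u + s *\<^sub>R (v - u)) has_derivative (\<lambda>s. s *\<^sub>R (v - u))) (at 0)"
      by (auto intro!: derivative_eq_intros)
    moreover have "(F has_derivative (\<lambda>h. gradF u \<bullet> h)) (at (u + 0 *\<^sub>R (v - u)))"
      using dF[of u] by simp
    ultimately have "(\<phi> has_derivative (\<lambda>s. gradF u \<bullet> (s *\<^sub>R (v - u)))) (at 0)"
      unfolding \<phi>_def by (rule has_derivative_compose)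
    then show ?thesis
      unfolding has_field_derivative_def by (simp add: mult.commute[of _ "gradF u \<bullet> (v - u)"])
  qed
  ultimately have "gradF u \<bullet> (v - u) * (1 - 0) \<le> \<phi> 1 - \<phi> 0"
    by (intro convex_on_imp_above_tangent[where A=UNIV]) auto
  then show ?thesis unfolding \<phi>_def by simp
qed

lemma convex_lipschitz_gradient_upper_bound:
  fixes F :: "'a::euclidean_space \<Rightarrow> real"
  assumes cv: "convex_on UNIV F"
    and dF: "\<And>u. (F has_derivative (\<lambda>h. gradF u \<bullet> h)) (at u)"
    and lip: "\<And>u v. norm (gradF u - gradF v) \<le> L * norm (u - v)"
  shows "F w \<le> F u + gradF u \<bullet> (w - u) + L * (norm (w - u))\<^sup>2"
proof -
  have "F w + gradF w \<bullet> (u - w) \<le> F u"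
    by (rule convex_on_gradient_inequality[OF cv dF])
  moreover have "(gradF w - gradF u) \<bullet> (w - u) \<le> norm (gradF w - gradF u) * norm (w - u)"
    by (rule norm_cauchy_schwarz)
  moreover have "norm (gradF w - gradF u) * norm (w - u) \<le> L * norm (w - u) * norm (w - u)"
    using lip[of w u] by (simp add: mult_right_mono)
  ultimately show ?thesis
    by (simp add: power2_eq_square inner_diff_left inner_diff_right)
qed

lemma Argmin_smooth_prox_stationary:
  fixes F :: "'a::euclidean_space \<Rightarrow> real"
  assumes dF: "\<And>u. (F has_derivative (\<lambda>h. gradF u \<bullet> h)) (at u)"
    and g: "\<gamma> > 0"
    and y: "y \<in> Argmin (\<lambda>v. F v + c * (norm v)\<^sup>2 + (1 / (2 * \<gamma>)) * (norm (v - x))\<^sup>2)"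
  shows "x = y + \<gamma> *\<^sub>R (gradF y + (2 * c) *\<^sub>R y)"
proof -
  define f where "f v = F v + c * (v \<bullet> v) + (1 / (2 * \<gamma>)) * ((v - x) \<bullet> (v - x))" for v
  define w where "w = gradF y + (2 * c) *\<^sub>R y + (1 / \<gamma>) *\<^sub>R (y - x)"
  have "(f has_derivative (\<lambda>h. w \<bullet> h)) (at y)"
    unfolding f_def w_def using g
    by (auto intro!: derivative_eq_intros dF simp: fun_eq_iff inner_commute field_simps inner_add_right inner_diff_right)
  moreover have "eventually (\<lambda>v. f y \<le> f v) (at y)"
    using y by (auto simp: Argmin_def f_def power2_norm_eq_inner[symmetric])
  ultimately have "w \<bullet> h = 0" for h
    using has_derivative_local_min by (metis (mono_tags))
  then have "\<gamma> *\<^sub>R w = 0" by (metis inner_eq_zero_iff scale_eq_0_iff)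
  then show ?thesis unfolding w_def using g by (simp add: algebra_simps)
qed

lemma frechet_subdiff_at_quadratic_min:
  fixes G :: "'a::euclidean_space \<Rightarrow> ereal"
  assumes fin: "\<bar>G w\<bar> \<noteq> \<infinity>"
    and min: "\<And>v. G w - ereal (A * (norm w)\<^sup>2) + ereal (B * (norm (p - w))\<^sup>2)
              \<le> G v - ereal (A * (norm v)\<^sup>2) + ereal (B * (norm (p - v))\<^sup>2)"
  shows "(2*A) *\<^sub>R w + (2*B) *\<^sub>R (p - w) \<in> frechet_subdiff G w"
proof -
  define s where "s = (2*A) *\<^sub>R w + (2*B) *\<^sub>R (p - w)"
  define c where "c = \<bar>A - B\<bar> + 1"
  obtain gw where gw: "G w = ereal gw" using fin by (cases "G w") auto
  have quadratic_gap: "(A - B) * (norm (z - w))\<^sup>2 \<le> gz - gw - s \<bullet> (z - w)"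
    if gz: "G z = ereal gz" for z gz
  proof -
    have "A * (norm z)\<^sup>2 - A * (norm w)\<^sup>2 - (B * (norm (p - z))\<^sup>2 - B * (norm (p - w))\<^sup>2)
        = s \<bullet> (z - w) + (A - B) * (norm (z - w))\<^sup>2"
      unfolding s_def
      by (simp add: power2_norm_eq_inner inner_diff_left inner_diff_right inner_add_left
          inner_commute algebra_simps)
    moreover have "gw - A * (norm w)\<^sup>2 + B * (norm (p - w))\<^sup>2
        \<le> gz - A * (norm z)\<^sup>2 + B * (norm (p - z))\<^sup>2"
      using min[of z] gw gz by simp
    ultimately show ?thesis by linarith
  qed
  have quotient_bound: "ereal (- c * norm (z - w))
      \<le> (G z - G w - ereal (s \<bullet> (z - w))) / ereal (norm (z - w))" if "z \<noteq> w" for z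
  proof -
    have n: "norm (z - w) > 0" using that by simp
    show ?thesis
    proof (cases "G z")
      case (real gz)
      have "- c * (norm (z - w))\<^sup>2 \<le> (A - B) * (norm (z - w))\<^sup>2"
        unfolding c_def by (intro mult_right_mono) auto
      with quadratic_gap[OF real]
      have "- c * norm (z - w) \<le> (gz - gw - s \<bullet> (z - w)) / norm (z - w)"
        using n by (simp add: pos_le_divide_eq power2_eq_square)
      then show ?thesis using real gw n by simp
    next
      case PInf
      then show ?thesis using gw n by simp
    next
      case MInf
      then show ?thesis using min[of z] gw by simp
    qed
  qed
  have "((\<lambda>z. ereal (- c * norm (z - w))) \<longlongrightarrow> ereal (- c * norm (w - w))) (at w)"
    by (intro tendsto_intros)
  then have "Liminf (at w) (\<lambda>z. ereal (- c * norm (z - w))) = 0"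
    by (simp add: lim_imp_Liminf zero_ereal_def)
  moreover have "Liminf (at w) (\<lambda>z. ereal (- c * norm (z - w)))
      \<le> Liminf (at w) (\<lambda>z. (G z - G w - ereal (s \<bullet> (z - w))) / ereal (norm (z - w)))"
    by (intro Liminf_mono) (auto simp: eventually_at intro!: exI[of _ 1] dest!: quotient_bound)
  ultimately show ?thesis
    unfolding frechet_subdiff_def s_def[symmetric] using fin by simp
qed

lemma lsc_fun_eventually_gt:
  fixes G :: "'a::euclidean_space \<Rightarrow> ereal"
  assumes "lsc_fun G" "c < G v"
  shows "eventually (\<lambda>w. c < G w) (nhds v)"
proof -
  have "G v \<le> Liminf (at v) G" using assms(1) unfolding lsc_fun_def by blast
  then have "eventually (\<lambda>w. c < G w) (at v)" using assms(2) le_Liminf_iff by blast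
  then show ?thesis using assms(2) eventually_nhds_conv_at by blast
qed

lemma lsc_fun_add_continuous_eventually_gt:
  fixes G :: "'a::euclidean_space \<Rightarrow> ereal" and F :: "'a \<Rightarrow> real"
  assumes lsc: "lsc_fun G" and G_nm: "\<And>v. G v \<noteq> -\<infinity>" and cont: "continuous_on UNIV F"
    and c: "c < ereal (F v) + G v"
  shows "eventually (\<lambda>w. c < ereal (F w) + G w) (nhds v)"
proof (cases c)
  case MInf
  then show ?thesis using G_nm by (auto intro!: always_eventually)
next
  case PInf
  then show ?thesis using c by simp
next
  case (real c')
  obtain e where e: "e > 0" "ereal (c' - F v + e) < G v"
  proof (cases "G v")
    case (real gv)
    then show ?thesis using c \<open>c = ereal c'\<close>
      by (intro that[of "(gv - c' + F v)/2"]) (auto simp: field_simps)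
  next
    case PInf
    then show ?thesis by (intro that[of 1]) auto
  next
    case MInf
    then show ?thesis using G_nm by simp
  qed
  have "eventually (\<lambda>w. ereal (c' - F v + e) < G w) (nhds v)"
    by (rule lsc_fun_eventually_gt[OF lsc e(2)])
  moreover have "eventually (\<lambda>w. dist (F w) (F v) < e) (nhds v)"
    using cont e(1) by (simp add: continuous_on_def tendsto_iff eventually_nhds_conv_at)
  ultimately show ?thesis
  proof (rule eventually_elim2)
    fix w assume w: "ereal (c' - F v + e) < G w" "dist (F w) (F v) < e"
    then have "ereal c' < ereal (F w) + ereal (c' - F v + e)"
      by (simp add: dist_real_def abs_less_iff)
    also have "\<dots> \<le> ereal (F w) + G w" using w(1) less_imp_le add_left_mono by blast
    finally show "c < ereal (F w) + G w" using real by simp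
  qed
qed

lemma coercive_lsc_bounded_below:
  fixes H :: "'a::euclidean_space \<Rightarrow> ereal"
  assumes lsc: "\<And>v c. c < H v \<Longrightarrow> eventually (\<lambda>w. c < H w) (nhds v)"
    and H_nm: "\<And>v. H v \<noteq> -\<infinity>"
    and coercive: "(H \<longlongrightarrow> \<infinity>) at_infinity"
  obtains m :: real where "\<And>v. ereal m \<le> H v"
proof (rule ccontr)
  assume "\<not> thesis"
  then have "\<forall>n::nat. \<exists>v. H v < ereal (- real n)" using that by (meson not_le)
  then obtain s where s: "\<And>n. H (s n) < ereal (- real n)" by metis
  have "eventually (\<lambda>v. (0::ereal) < H v) at_infinity"
    using order_tendstoD(1)[OF coercive] by simp
  then obtain R where R: "\<And>v. R \<le> norm v \<Longrightarrow> 0 < H v"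
    unfolding eventually_at_infinity by blast
  have "s n \<in> cball 0 R" for n
  proof (rule ccontr)
    assume "s n \<notin> cball 0 R"
    then have "0 < H (s n)" using R by auto
    moreover have "ereal (- real n) \<le> 0" by (simp add: zero_ereal_def)
    ultimately show False using s[of n] by (meson less_le_not_le order.strict_trans order.trans)
  qed
  then obtain l r where lr: "strict_mono r" "(s \<circ> r) \<longlonglongrightarrow> l"
    using seq_compactE[OF compact_imp_seq_compact[OF compact_cball]] by metis
  obtain c :: real where c: "ereal c < H l"
  proof (cases "H l")
    case (real r) then show ?thesis by (intro that[of "r - 1"]) simp
  next
    case PInf then show ?thesis by (intro that[of 0]) simp
  next
    case MInf then show ?thesis using H_nm[of l] by simp
  qed
  have "eventually (\<lambda>n. ereal c < H ((s \<circ> r) n)) sequentially"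
    by (rule eventually_compose_filterlim[OF lsc[OF c] lr(2)])
  moreover have "eventually (\<lambda>n. real n > - c) sequentially"
    by (rule eventually_sequentiallyI[of "nat (ceiling (- c)) + 1"]) linarith
  ultimately obtain n where n: "ereal c < H (s (r n))" "real n > - c"
    using eventually_happens[OF eventually_conj] by fastforce
  have "real n \<le> real (r n)" using seq_suble[OF lr(1)] by simp
  then have "H (s (r n)) < ereal c" using s[of "r n"] n(2)
    by (metis ereal_less_eq(3) le_less_trans less_le_not_le minus_le_iff order.strict_trans2
        linorder_not_le)
  with n(1) show False by simp
qed

lemma lsc_fun_tendsto_of_upper_bound:
  fixes G :: "'a::euclidean_space \<Rightarrow> ereal"
  assumes lsc: "lsc_fun G" and zs: "zs \<longlonglongrightarrow> zb"
    and G_zs: "\<And>t. G (zs t) = ereal (gs t)" and G_zb: "G zb = ereal gb"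
    and upper: "\<And>t. gs t \<le> gb + h t" and h: "h \<longlonglongrightarrow> 0"
  shows "gs \<longlonglongrightarrow> gb"
  unfolding tendsto_iff
proof (intro allI impI)
  fix e :: real assume e: "e > 0"
  have "ereal (gb - e) < G zb" using G_zb e by simp
  from eventually_compose_filterlim[OF lsc_fun_eventually_gt[OF lsc this] zs]
  have "\<forall>\<^sub>F t in sequentially. gb - e < gs t" by (simp add: G_zs)
  moreover have "\<forall>\<^sub>F t in sequentially. h t < e" using order_tendstoD(2)[OF h e] .
  ultimately show "\<forall>\<^sub>F t in sequentially. dist (gs t) gb < e"
  proof eventually_elim
    case (elim t)
    then show ?case using upper[of t] by (simp add: dist_real_def abs_less_iff)
  qed
qed

lemma bounded_lipschitz_comp:
  fixes f :: "'a::real_normed_vector \<Rightarrow> 'b::real_normed_vector"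
  assumes lip: "\<And>u v. norm (f u - f v) \<le> L * norm (u - v)"
    and bdd: "bounded (h ` S)"
  shows "bounded ((\<lambda>t. f (h t)) ` S)"
proof -
  obtain B where B: "\<And>t. t \<in> S \<Longrightarrow> norm (h t) \<le> B"
    using bdd unfolding bounded_iff by blast
  have "norm (f (h t)) \<le> norm (f 0) + \<bar>L\<bar> * B" if "t \<in> S" for t
  proof -
    have "norm (f (h t)) \<le> norm (f 0) + L * norm (h t)"
      using lip[of "h t" 0] norm_triangle_ineq2[of "f (h t)" "f 0"] by simp
    also have "\<dots> \<le> norm (f 0) + \<bar>L\<bar> * B"
      using B[OF that] by (smt (verit) abs_ge_self mult_left_mono mult_right_mono norm_ge_zero)
    finally show ?thesis .
  qed
  then show ?thesis unfolding bounded_iff by blast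
qed

lemma pr_completed_square:
  fixes u a w :: "'a::real_inner"
  assumes "\<gamma> > 0"
  shows "(a - (2*A) *\<^sub>R u) \<bullet> (w - u) + (1/(2*\<gamma>) - A) * (norm (w - u))\<^sup>2
    = A * (norm u)\<^sup>2 - (1/(2*\<gamma>)) * \<gamma>\<^sup>2 * (norm a)\<^sup>2 - A * (norm w)\<^sup>2
      + (1/(2*\<gamma>)) * (norm (u - \<gamma> *\<^sub>R a - w))\<^sup>2"
  using assms unfolding power2_norm_eq_inner
  by (simp add: inner_diff_left inner_diff_right inner_add_left inner_add_right inner_commute
      algebra_simps power2_eq_square field_simps)

lemma pr_merit_difference_identity:
  fixes u d a e :: "'a::real_inner"
  assumes "\<gamma> > 0"
  shows "A * (norm (u + d))\<^sup>2 - (1/(2*\<gamma>)) * \<gamma>\<^sup>2 * (norm (a + e))\<^sup>2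
       - A * (norm (u + (1/2) *\<^sub>R (d + \<gamma> *\<^sub>R e)))\<^sup>2
     + (1/(2*\<gamma>)) * (norm (u + d - \<gamma> *\<^sub>R (a + e) - (u + (1/2) *\<^sub>R (d + \<gamma> *\<^sub>R e))))\<^sup>2
     - (a - (2*A) *\<^sub>R u) \<bullet> ((1/2) *\<^sub>R (d + \<gamma> *\<^sub>R e))
     - (1/(2*\<gamma>) - A) * (norm ((1/2) *\<^sub>R (d + \<gamma> *\<^sub>R e)))\<^sup>2
     - (a + e - (2*A) *\<^sub>R (u + d)) \<bullet> (- d)
   = (\<gamma>/2) * (norm e)\<^sup>2 - A * (norm d)\<^sup>2"
  using assms unfolding power2_norm_eq_inner
  by (simp add: inner_diff_left inner_diff_right inner_add_left inner_add_right inner_commute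
      algebra_simps power2_eq_square field_simps)

lemma small_step_quadratic_bound:
  fixes n d :: real
  assumes "L > 0" "0 \<le> \<gamma>" "\<gamma> < 1 / (12 * L)" "0 \<le> n" "n \<le> 6 * L * d"
  shows "(\<gamma>/2) * n\<^sup>2 \<le> (3/2) * L * d\<^sup>2"
proof -
  have "\<gamma> * L \<le> 1/12" using assms(1,3) by (simp add: field_simps)
  have "n\<^sup>2 \<le> 36 * L\<^sup>2 * d\<^sup>2"
    using power_mono[OF assms(5,4), of 2] by (simp add: power_mult_distrib)
  then have "(\<gamma>/2) * n\<^sup>2 \<le> (\<gamma>/2) * (36 * L\<^sup>2 * d\<^sup>2)"
    using assms(2) by (intro mult_left_mono) auto
  also have "\<dots> = 18 * (\<gamma> * L) * (L * d\<^sup>2)"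
    by (simp add: power2_eq_square)
  also have "\<dots> \<le> 18 * (1/12) * (L * d\<^sup>2)"
    using \<open>\<gamma> * L \<le> 1/12\<close> assms(1) by (intro mult_right_mono mult_left_mono) auto
  finally show ?thesis by simp
qed

text \<open>One step of the merit decrease: \<open>u, w, a, q, g, Fu\<close> stand for \<open>y\<^sub>t, z\<^sub>t\<close>, the
  shifted gradient \<open>\<nabla>F y\<^sub>t + 5L y\<^sub>t\<close>, the gradient \<open>\<nabla>F y\<^sub>t\<close>, \<open>G z\<^sub>t\<close> and \<open>F y\<^sub>t\<close>;
  primed names are the same quantities at step \<open>t + 1\<close>.\<close>

lemma pr_merit_descent_step:
  fixes u u' w w' a a' q q' :: "'a::real_inner"
  assumes g: "\<gamma> > 0" and L: "L > 0" "\<gamma> < 1 / (12 * L)"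
    and q: "q = a - (5*L) *\<^sub>R u" and q': "q' = a' - (5*L) *\<^sub>R u'"
    and lip: "norm (q' - q) \<le> L * norm (u' - u)"
    and w: "w = u + (1/2) *\<^sub>R ((u' - u) + \<gamma> *\<^sub>R (a' - a))"
    and min: "g' - (5*L/2) * (norm w')\<^sup>2 + (1/(2*\<gamma>)) * (norm (u' - \<gamma> *\<^sub>R a' - w'))\<^sup>2
       \<le> g - (5*L/2) * (norm w)\<^sup>2 + (1/(2*\<gamma>)) * (norm (u' - \<gamma> *\<^sub>R a' - w))\<^sup>2"
    and convex: "Fu' + q' \<bullet> (u - u') \<le> Fu"
  shows "Fu' + q' \<bullet> (w' - u') + (1/(2*\<gamma>) - 5*L/2) * (norm (w' - u'))\<^sup>2 + g'
     \<le> Fu + q \<bullet> (w - u) + (1/(2*\<gamma>) - 5*L/2) * (norm (w - u))\<^sup>2 + g - L * (norm (u' - u))\<^sup>2"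
proof -
  have A: "2 * (5*L/2) = 5*L" by simp
  have new: "q' \<bullet> (w' - u') + (1/(2*\<gamma>) - 5*L/2) * (norm (w' - u'))\<^sup>2
    = (5*L/2) * (norm u')\<^sup>2 - (1/(2*\<gamma>)) * \<gamma>\<^sup>2 * (norm a')\<^sup>2 - (5*L/2) * (norm w')\<^sup>2
      + (1/(2*\<gamma>)) * (norm (u' - \<gamma> *\<^sub>R a' - w'))\<^sup>2"
    using pr_completed_square[OF g, of a' "5*L/2" u' w'] unfolding q' A .
  have wu: "w - u = (1/2) *\<^sub>R ((u' - u) + \<gamma> *\<^sub>R (a' - a))" using w by simp
  have old: "(5*L/2) * (norm u')\<^sup>2 - (1/(2*\<gamma>)) * \<gamma>\<^sup>2 * (norm a')\<^sup>2 - (5*L/2) * (norm w)\<^sup>2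
     + (1/(2*\<gamma>)) * (norm (u' - \<gamma> *\<^sub>R a' - w))\<^sup>2
     - q \<bullet> (w - u) - (1/(2*\<gamma>) - 5*L/2) * (norm (w - u))\<^sup>2 + q' \<bullet> (u' - u)
   = (\<gamma>/2) * (norm (a' - a))\<^sup>2 - (5*L/2) * (norm (u' - u))\<^sup>2"
    using pr_merit_difference_identity[OF g, of "5*L/2" u "u' - u" a "a' - a"]
    unfolding A wu[symmetric] w[symmetric] q[symmetric]
    by (simp add: q' inner_minus_right inner_diff_right)
  have "norm (a' - a) \<le> norm (q' - q) + norm ((5*L) *\<^sub>R (u' - u))"
    using norm_triangle_ineq[of "q' - q" "(5*L) *\<^sub>R (u' - u)"] by (simp add: q q' algebra_simps)
  also have "\<dots> \<le> 6 * L * norm (u' - u)" using lip L by simp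
  finally have "(\<gamma>/2) * (norm (a' - a))\<^sup>2 \<le> (3/2) * L * (norm (u' - u))\<^sup>2"
    using small_step_quadratic_bound[OF L(1) _ L(2)] g by simp
  moreover have "Fu' - Fu \<le> q' \<bullet> (u' - u)" using convex by (simp add: inner_diff_right)
  ultimately show ?thesis using new old min by linarith
qed

locale modified_PR =
  fixes F :: "'a::euclidean_space \<Rightarrow> real" and gradF :: "'a \<Rightarrow> 'a"
    and G :: "'a \<Rightarrow> ereal"
    and L \<gamma> :: real and x y z :: "nat \<Rightarrow> 'a"
  assumes F_convex: "convex_on UNIV F"
    and F_grad: "\<And>u. (F has_derivative (\<lambda>h. gradF u \<bullet> h)) (at u)"
    and L_pos: "L > 0"
    and F_lip: "\<And>u v. norm (gradF u - gradF v) \<le> L * norm (u - v)"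
    and G_proper: "proper_fun G"
    and G_lsc: "lsc_fun G"
    and coercive: "((\<lambda>u. ereal (F u) + G u) \<longlongrightarrow> \<infinity>) at_infinity"
    and gamma_pos: "0 < \<gamma>" and gamma_small: "\<gamma> < 1 / (12 * L)"
    and y_step: "\<And>t. y (Suc t) \<in> Argmin (\<lambda>v. F v + (5 * L / 2) * (norm v)\<^sup>2
                      + (1 / (2 * \<gamma>)) * (norm (v - x t))\<^sup>2)"
    and z_step: "\<And>t. z (Suc t) \<in> Argmin (\<lambda>v. G v - ereal ((5 * L / 2) * (norm v)\<^sup>2)
                      + ereal ((1 / (2 * \<gamma>)) * (norm (2 *\<^sub>R y (Suc t) - x t - v))\<^sup>2))"
    and x_step: "\<And>t. x (Suc t) = x t + 2 *\<^sub>R (z (Suc t) - y (Suc t))"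
begin

definition shifted_grad :: "nat \<Rightarrow> 'a" where
  "shifted_grad t = gradF (y (Suc t)) + (5 * L) *\<^sub>R y (Suc t)"

definition reflected :: "nat \<Rightarrow> 'a" where
  "reflected t = 2 *\<^sub>R y (Suc t) - x t"

definition G_val :: "nat \<Rightarrow> real" where
  "G_val t = real_of_ereal (G (z (Suc t)))"

definition merit :: "nat \<Rightarrow> real" where
  "merit t = F (y (Suc t)) + gradF (y (Suc t)) \<bullet> (z (Suc t) - y (Suc t))
     + (1/(2*\<gamma>) - 5*L/2) * (norm (z (Suc t) - y (Suc t)))\<^sup>2 + G_val t"

lemma G_not_MInf: "G v \<noteq> -\<infinity>"
  using G_proper unfolding proper_fun_def by auto

lemma F_continuous: "continuous_on UNIV F"
  using F_grad by (meson continuous_at_imp_continuous_on has_derivative_continuous)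

lemma x_eq: "x t = y (Suc t) + \<gamma> *\<^sub>R shifted_grad t"
proof -
  have "2 * (5 * L / 2) = 5 * L" by simp
  then show ?thesis
    using Argmin_smooth_prox_stationary[OF F_grad gamma_pos y_step[of t]]
    unfolding shifted_grad_def by simp
qed

lemma z_min:
  "G (z (Suc t)) - ereal ((5*L/2) * (norm (z (Suc t)))\<^sup>2)
      + ereal ((1/(2*\<gamma>)) * (norm (reflected t - z (Suc t)))\<^sup>2)
    \<le> G v - ereal ((5*L/2) * (norm v)\<^sup>2) + ereal ((1/(2*\<gamma>)) * (norm (reflected t - v))\<^sup>2)"
  using z_step[of t] unfolding Argmin_def reflected_def by blast

lemma G_z_finite: "\<bar>G (z (Suc t))\<bar> \<noteq> \<infinity>"
proof
  obtain v where v: "G v \<noteq> \<infinity>" using G_proper unfolding proper_fun_def by auto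
  assume "\<bar>G (z (Suc t))\<bar> = \<infinity>"
  then have "G (z (Suc t)) = \<infinity>" using G_not_MInf by (cases "G (z (Suc t))") auto
  then show False using z_min[of t v] v G_not_MInf[of v] by (cases "G v") auto
qed

lemma G_z_eq: "G (z (Suc t)) = ereal (G_val t)"
  using G_z_finite[of t] unfolding G_val_def by (simp add: ereal_real)

lemma z_min_real:
  assumes "G v = ereal gv"
  shows "G_val t - (5*L/2) * (norm (z (Suc t)))\<^sup>2 + (1/(2*\<gamma>)) * (norm (reflected t - z (Suc t)))\<^sup>2
     \<le> gv - (5*L/2) * (norm v)\<^sup>2 + (1/(2*\<gamma>)) * (norm (reflected t - v))\<^sup>2"
  using z_min[of t v] assms G_z_eq[of t] by simp

lemma merit_decrease: "merit (Suc t) \<le> merit t - L * (norm (y (Suc (Suc t)) - y (Suc t)))\<^sup>2"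
proof -
  have "2 *\<^sub>R (z (Suc t) - y (Suc t))
      = (y (Suc (Suc t)) - y (Suc t)) + \<gamma> *\<^sub>R (shifted_grad (Suc t) - shifted_grad t)"
    using x_step[of t] x_eq[of t] x_eq[of "Suc t"] by (simp add: algebra_simps)
  then have z_eq: "z (Suc t) = y (Suc t)
      + (1/2) *\<^sub>R ((y (Suc (Suc t)) - y (Suc t)) + \<gamma> *\<^sub>R (shifted_grad (Suc t) - shifted_grad t))"
    by (smt (verit) add_diff_cancel_left' scaleR_scaleR scaleR_one diff_add_cancel
        nonzero_divide_eq_eq zero_neq_numeral times_divide_eq_right mult.commute divide_self_if)
  have "reflected (Suc t) = y (Suc (Suc t)) - \<gamma> *\<^sub>R shifted_grad (Suc t)"
    using x_eq[of "Suc t"] unfolding reflected_def by (simp add: algebra_simps scaleR_2)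
  then have "G_val (Suc t) - (5*L/2) * (norm (z (Suc (Suc t))))\<^sup>2
       + (1/(2*\<gamma>)) * (norm (y (Suc (Suc t)) - \<gamma> *\<^sub>R shifted_grad (Suc t) - z (Suc (Suc t))))\<^sup>2
     \<le> G_val t - (5*L/2) * (norm (z (Suc t)))\<^sup>2
       + (1/(2*\<gamma>)) * (norm (y (Suc (Suc t)) - \<gamma> *\<^sub>R shifted_grad (Suc t) - z (Suc t)))\<^sup>2"
    using z_min_real[OF G_z_eq[of t], of "Suc t"] by simp
  moreover have "F (y (Suc (Suc t))) + gradF (y (Suc (Suc t))) \<bullet> (y (Suc t) - y (Suc (Suc t)))
      \<le> F (y (Suc t))"
    by (rule convex_on_gradient_inequality[OF F_convex F_grad])
  ultimately show ?thesis unfolding merit_def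
    by (intro pr_merit_descent_step[OF gamma_pos L_pos gamma_small _ _ F_lip z_eq])
      (simp_all add: shifted_grad_def)
qed

lemma merit_decseq: "decseq merit"
  using merit_decrease L_pos
  by (intro decseq_SucI) (smt (verit, best) mult_nonneg_nonneg zero_le_power2)

lemma gamma_margin: "1/(2*\<gamma>) - 7*L/2 > 0"
proof -
  have "7 * L * \<gamma> < 1" using gamma_small gamma_pos L_pos by (simp add: field_simps)
  then show ?thesis using gamma_pos by (simp add: field_simps)
qed

lemma merit_lower:
  "F (z (Suc t)) + G_val t + (1/(2*\<gamma>) - 7*L/2) * (norm (z (Suc t) - y (Suc t)))\<^sup>2 \<le> merit t"
  using convex_lipschitz_gradient_upper_bound[OF F_convex F_grad F_lip,
      of "z (Suc t)" "y (Suc t)"]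
  unfolding merit_def by (simp add: algebra_simps)

lemma objective_le_merit_0: "F (z (Suc t)) + G_val t \<le> merit 0"
  using merit_lower[of t] merit_decseq[unfolded decseq_def, rule_format, of 0 t] gamma_margin
  by (smt (verit, best) mult_nonneg_nonneg zero_le_power2 le0)

lemma objective_bounded_below:
  obtains m :: real where "\<And>v. ereal m \<le> ereal (F v) + G v"
proof -
  have "\<forall>\<^sub>F w in nhds v. c < ereal (F w) + G w" if "c < ereal (F v) + G v" for v c
    by (rule lsc_fun_add_continuous_eventually_gt[OF G_lsc G_not_MInf F_continuous that])
  moreover have "ereal (F v) + G v \<noteq> - \<infinity>" for v
    using G_not_MInf[of v] by (cases "G v") auto
  ultimately show thesis using coercive_lsc_bounded_below[OF _ _ coercive] that by blast
qed

lemma merit_converges: "convergent merit"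
proof -
  obtain m where m: "\<And>v. ereal m \<le> ereal (F v) + G v" using objective_bounded_below by blast
  have "m \<le> merit t" for t
    using m[of "z (Suc t)"] merit_lower[of t] gamma_margin unfolding G_z_eq
    by (smt (verit, best) mult_nonneg_nonneg zero_le_power2 ereal_less_eq(3) plus_ereal.simps(1))
  then show ?thesis
    using decseq_convergent[OF merit_decseq] by (metis convergent_def)
qed

lemma z_minus_y_bounded: "bounded (range (\<lambda>t. z (Suc t) - y (Suc t)))"
proof -
  obtain m where m: "\<And>v. ereal m \<le> ereal (F v) + G v" using objective_bounded_below by blast
  define K where "K = (merit 0 - m) / (1/(2*\<gamma>) - 7*L/2)"
  have "(norm (z (Suc t) - y (Suc t)))\<^sup>2 \<le> K" for t
  proof -
    have "m \<le> F (z (Suc t)) + G_val t" using m[of "z (Suc t)"] unfolding G_z_eq by simp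
    then have "(1/(2*\<gamma>) - 7*L/2) * (norm (z (Suc t) - y (Suc t)))\<^sup>2 \<le> merit 0 - m"
      using merit_lower[of t] merit_decseq[unfolded decseq_def, rule_format, of 0 t] by simp
    then show ?thesis unfolding K_def using gamma_margin by (simp add: field_simps)
  qed
  then show ?thesis unfolding bounded_iff by (blast intro: real_le_rsqrt)
qed

lemma z_bounded: "bounded (range (\<lambda>t. z (Suc t)))"
proof -
  obtain R where R: "\<And>v. R \<le> norm v \<Longrightarrow> ereal (merit 0) < ereal (F v) + G v"
    using order_tendstoD(1)[OF coercive, of "ereal (merit 0)"]
    unfolding eventually_at_infinity by auto
  have "norm (z (Suc t)) \<le> R" for t
    using R[of "z (Suc t)"] objective_le_merit_0[of t] unfolding G_z_eq by fastforce
  then show ?thesis unfolding bounded_iff by blast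
qed

lemma iterates_bounded: "bounded (range (\<lambda>t. (y (Suc t), z (Suc t), x (Suc t))))"
proof -
  have y: "bounded (range (\<lambda>t. y (Suc t)))"
    using bounded_minus_comp[OF z_bounded z_minus_y_bounded] by simp
  have "bounded (range shifted_grad)"
    unfolding shifted_grad_def
    by (intro bounded_plus_comp bounded_scaleR_comp bounded_lipschitz_comp[OF F_lip] y)
  then have "bounded (range (\<lambda>t. y (Suc t) + \<gamma> *\<^sub>R shifted_grad t))"
    by (intro bounded_plus_comp bounded_scaleR_comp y)
  then have "bounded (range x)" unfolding x_eq[symmetric] by simp
  then have x: "bounded (range (\<lambda>t. x (Suc t)))"
    by (rule bounded_subset) auto
  have "range (\<lambda>t. (y (Suc t), z (Suc t), x (Suc t)))
      \<subseteq> range (\<lambda>t. y (Suc t)) \<times> (range (\<lambda>t. z (Suc t)) \<times> range (\<lambda>t. x (Suc t)))"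
    by auto
  then show ?thesis
    using bounded_subset bounded_Times[OF y bounded_Times[OF z_bounded x]] by blast
qed

lemma y_steps_vanish: "(\<lambda>t. norm (y (Suc (Suc t)) - y (Suc t))) \<longlonglongrightarrow> 0"
proof -
  obtain l where l: "merit \<longlonglongrightarrow> l" using merit_converges by (auto simp: convergent_def)
  have "(\<lambda>t. merit t - merit (Suc t)) \<longlonglongrightarrow> 0"
    using tendsto_diff[OF l LIMSEQ_Suc[OF l]] by simp
  from tendsto_divide_zero[OF this, of L]
  have upper: "(\<lambda>t. (merit t - merit (Suc t)) / L) \<longlonglongrightarrow> 0" .
  have "(norm (y (Suc (Suc t)) - y (Suc t)))\<^sup>2 \<le> (merit t - merit (Suc t)) / L" for t
    using merit_decrease[of t] L_pos by (simp add: pos_le_divide_eq mult.commute)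
  then have "(\<lambda>t. (norm (y (Suc (Suc t)) - y (Suc t)))\<^sup>2) \<longlonglongrightarrow> 0"
    by (intro tendsto_sandwich[OF _ _ tendsto_const upper]) auto
  from tendsto_real_sqrt[OF this] show ?thesis by simp
qed

lemma x_step_bound:
  "norm (x (Suc t) - x t) \<le> (1 + 6 * \<gamma> * L) * norm (y (Suc (Suc t)) - y (Suc t))"
proof -
  define d where "d = y (Suc (Suc t)) - y (Suc t)"
  define e where "e = gradF (y (Suc (Suc t))) - gradF (y (Suc t))"
  have "x (Suc t) - x t = d + \<gamma> *\<^sub>R (e + (5 * L) *\<^sub>R d)"
    unfolding x_eq d_def e_def shifted_grad_def by (simp add: algebra_simps)
  also have "norm \<dots> \<le> norm d + \<gamma> * (norm e + 5 * L * norm d)"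
    using norm_triangle_ineq[of d] norm_triangle_ineq[of e] gamma_pos L_pos
    by (smt (verit) mult_left_mono norm_scaleR abs_of_pos)
  also have "\<dots> \<le> norm d + \<gamma> * (L * norm d + 5 * L * norm d)"
    using F_lip[of "y (Suc (Suc t))" "y (Suc t)"] gamma_pos
    unfolding d_def e_def by (simp add: mult_left_mono)
  finally show ?thesis unfolding d_def by (simp add: algebra_simps)
qed

lemma x_steps_vanish: "(\<lambda>t. x (Suc t) - x t) \<longlonglongrightarrow> 0"
  by (rule Lim_null_comparison[OF _ tendsto_mult_right_zero[OF y_steps_vanish,
        of "1 + 6 * \<gamma> * L"]])
    (use x_step_bound in auto)

lemma z_minus_y_vanish: "(\<lambda>t. z (Suc t) - y (Suc t)) \<longlonglongrightarrow> 0"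
proof -
  have "z (Suc t) - y (Suc t) = (1/2) *\<^sub>R (x (Suc t) - x t)" for t
    using x_step[of t] by simp
  then show ?thesis using tendsto_scaleR[OF tendsto_const x_steps_vanish, of "1/2"] by simp
qed

lemma gradF_continuous: "continuous_on UNIV gradF"
  by (rule lipschitz_on_continuous_on[of L])
    (use F_lip L_pos in \<open>auto intro!: lipschitz_onI simp: dist_norm\<close>)

context
  fixes r :: "nat \<Rightarrow> nat" and yb zb xb :: 'a
  assumes r: "strict_mono r"
    and lim: "(\<lambda>t. (y (Suc (r t)), z (Suc (r t)), x (Suc (r t)))) \<longlonglongrightarrow> (yb, zb, xb)"
begin

lemma cluster_lims:
  shows y_lim: "(\<lambda>t. y (Suc (r t))) \<longlonglongrightarrow> yb"
    and z_lim: "(\<lambda>t. z (Suc (r t))) \<longlonglongrightarrow> zb"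
    and x_lim: "(\<lambda>t. x (Suc (r t))) \<longlonglongrightarrow> xb"
  using tendsto_fst[OF lim] tendsto_fst[OF tendsto_snd[OF lim]] tendsto_snd[OF tendsto_snd[OF lim]]
  by simp_all

lemma subseq_vanish: "f \<longlonglongrightarrow> 0 \<Longrightarrow> (\<lambda>t. f (r t)) \<longlonglongrightarrow> 0"
  using LIMSEQ_subseq_LIMSEQ[OF _ r] by (simp add: o_def)

lemma cluster_y_eq_z: "yb = zb"
proof -
  have "(\<lambda>t. z (Suc (r t)) - y (Suc (r t))) \<longlonglongrightarrow> 0"
    by (rule subseq_vanish[OF z_minus_y_vanish])
  moreover have "(\<lambda>t. z (Suc (r t)) - y (Suc (r t))) \<longlonglongrightarrow> zb - yb"
    by (intro tendsto_diff z_lim y_lim)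
  ultimately show ?thesis using LIMSEQ_unique by fastforce
qed

lemma x_prev_lim: "(\<lambda>t. x (r t)) \<longlonglongrightarrow> xb"
  using tendsto_diff[OF x_lim subseq_vanish[OF x_steps_vanish]] by simp

lemma cluster_x_eq: "xb = yb + \<gamma> *\<^sub>R (gradF yb + (5 * L) *\<^sub>R yb)"
proof -
  have "(\<lambda>t. gradF (y (Suc (r t)))) \<longlonglongrightarrow> gradF yb"
    using continuous_on_tendsto_compose[OF gradF_continuous y_lim] by simp
  then have "(\<lambda>t. x (r t)) \<longlonglongrightarrow> yb + \<gamma> *\<^sub>R (gradF yb + (5 * L) *\<^sub>R yb)"
    unfolding x_eq shifted_grad_def by (intro tendsto_intros y_lim)
  then show ?thesis using x_prev_lim LIMSEQ_unique by blast
qed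

lemma reflected_lim: "(\<lambda>t. reflected (r t)) \<longlonglongrightarrow> 2 *\<^sub>R yb - xb"
  unfolding reflected_def by (intro tendsto_intros y_lim x_prev_lim)

lemma G_cluster_finite: "G zb = ereal (real_of_ereal (G zb))"
proof -
  have F_lim: "(\<lambda>t. F (z (Suc (r t)))) \<longlonglongrightarrow> F zb"
    using continuous_on_tendsto_compose[OF F_continuous z_lim] by simp
  have "G zb \<le> ereal (merit 0 - F zb + 1)"
  proof (rule ccontr)
    assume "\<not> ?thesis"
    then have "ereal (merit 0 - F zb + 1) < G zb" by simp
    from eventually_compose_filterlim[OF lsc_fun_eventually_gt[OF G_lsc this] z_lim]
    have "\<forall>\<^sub>F t in sequentially. ereal (merit 0 - F zb + 1) < G (z (Suc (r t)))" .
    moreover have "\<forall>\<^sub>F t in sequentially. F zb - 1 < F (z (Suc (r t)))"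
      using order_tendstoD(1)[OF F_lim, of "F zb - 1"] by simp
    ultimately have "\<forall>\<^sub>F t in sequentially. False"
    proof eventually_elim
      case (elim t)
      then show False using objective_le_merit_0[of "r t"] G_z_eq[of "r t"] by simp
    qed
    then show False by simp
  qed
  then show ?thesis using G_not_MInf[of zb] by (cases "G zb") auto
qed

lemma G_cluster_lim: "(\<lambda>t. G (z (Suc (r t)))) \<longlonglongrightarrow> G zb"
proof -
  define gb where "gb = real_of_ereal (G zb)"
  define h where "h t = (5*L/2) * (norm (z (Suc (r t))))\<^sup>2
      - (1/(2*\<gamma>)) * (norm (reflected (r t) - z (Suc (r t))))\<^sup>2
      - (5*L/2) * (norm zb)\<^sup>2 + (1/(2*\<gamma>)) * (norm (reflected (r t) - zb))\<^sup>2" for t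
  have G_zb: "G zb = ereal gb" using G_cluster_finite unfolding gb_def .
  have "h \<longlonglongrightarrow> (5*L/2) * (norm zb)\<^sup>2 - (1/(2*\<gamma>)) * (norm ((2 *\<^sub>R yb - xb) - zb))\<^sup>2
      - (5*L/2) * (norm zb)\<^sup>2 + (1/(2*\<gamma>)) * (norm ((2 *\<^sub>R yb - xb) - zb))\<^sup>2"
    unfolding h_def by (intro tendsto_intros z_lim reflected_lim)
  then have "h \<longlonglongrightarrow> 0" by simp
  moreover have "G_val (r t) \<le> gb + h t" for t
    using z_min_real[OF G_zb, of "r t"] unfolding h_def by simp
  ultimately have "(\<lambda>t. G_val (r t)) \<longlonglongrightarrow> gb"
    by (intro lsc_fun_tendsto_of_upper_bound[OF G_lsc z_lim G_z_eq G_zb])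
  then show ?thesis unfolding G_z_eq G_zb by simp
qed

lemma neg_grad_in_limiting_subdiff: "- gradF zb \<in> limiting_subdiff G zb"
proof -
  define vs where "vs t = (2 * (5*L/2)) *\<^sub>R z (Suc (r t))
      + (2 * (1/(2*\<gamma>))) *\<^sub>R (reflected (r t) - z (Suc (r t)))" for t
  have "vs t \<in> frechet_subdiff G (z (Suc (r t)))" for t
    unfolding vs_def by (rule frechet_subdiff_at_quadratic_min[OF G_z_finite z_min])
  moreover have "vs \<longlonglongrightarrow> (2 * (5*L/2)) *\<^sub>R zb + (2 * (1/(2*\<gamma>))) *\<^sub>R ((2 *\<^sub>R yb - xb) - zb)"
    unfolding vs_def by (intro tendsto_intros z_lim reflected_lim)
  moreover have "(2 * (5*L/2)) *\<^sub>R zb + (2 * (1/(2*\<gamma>))) *\<^sub>R ((2 *\<^sub>R yb - xb) - zb) = - gradF zb"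
    using cluster_x_eq cluster_y_eq_z gamma_pos by (simp add: algebra_simps scaleR_2)
  ultimately show ?thesis
    unfolding limiting_subdiff_def using z_lim G_cluster_lim by auto
qed

end

end

theorem corollary1:
  fixes F :: "'a::euclidean_space \<Rightarrow> real" and gradF :: "'a \<Rightarrow> 'a"
    and G :: "'a \<Rightarrow> ereal"
    and L \<gamma> :: real and x y z :: "nat \<Rightarrow> 'a"
  assumes F_convex: "convex_on UNIV F"
    and F_grad: "\<And>u. (F has_derivative (\<lambda>h. gradF u \<bullet> h)) (at u)"
    and L_pos: "L > 0"
    and F_lip: "\<And>u v. norm (gradF u - gradF v) \<le> L * norm (u - v)"
    and G_proper: "proper_fun G"
    and G_lsc: "lsc_fun G"
    and G_prox: "\<And>w \<tau>. \<tau> > 0 \<Longrightarrow>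
        Argmin (\<lambda>u. ereal \<tau> * G u + ereal ((1/2) * (norm (u - w))\<^sup>2)) \<noteq> {}"
    and coercive: "((\<lambda>u. ereal (F u) + G u) \<longlongrightarrow> \<infinity>) at_infinity"
    and gamma: "0 < \<gamma>" "\<gamma> < 1 / (12 * L)"
    and y_step: "\<And>t. y (Suc t) \<in> Argmin (\<lambda>v. F v + (5 * L / 2) * (norm v)\<^sup>2
                      + (1 / (2 * \<gamma>)) * (norm (v - x t))\<^sup>2)"
    and z_step: "\<And>t. z (Suc t) \<in> Argmin (\<lambda>v. G v - ereal ((5 * L / 2) * (norm v)\<^sup>2)
                      + ereal ((1 / (2 * \<gamma>)) * (norm (2 *\<^sub>R y (Suc t) - x t - v))\<^sup>2))"
    and x_step: "\<And>t. x (Suc t) = x t + 2 *\<^sub>R (z (Suc t) - y (Suc t))"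
  shows "bounded (range (\<lambda>t. (y (Suc t), z (Suc t), x (Suc t))))
    \<and> (\<forall>yb zb xb r. strict_mono r \<and>
          ((\<lambda>t. (y (Suc (r t)), z (Suc (r t)), x (Suc (r t)))) \<longlonglongrightarrow> (yb, zb, xb))
        \<longrightarrow> yb = zb \<and> 0 \<in> (\<lambda>v. gradF zb + v) ` limiting_subdiff G zb)"
proof -
  \<comment> \<open>G_prox only makes the iteration well defined; the iterates are given here.\<close>
  interpret modified_PR F gradF G L \<gamma> x y z
    by unfold_locales (use assms in auto)
  have "yb = zb \<and> 0 \<in> (\<lambda>v. gradF zb + v) ` limiting_subdiff G zb"
    if "strict_mono r" "(\<lambda>t. (y (Suc (r t)), z (Suc (r t)), x (Suc (r t)))) \<longlonglongrightarrow> (yb, zb, xb)"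
    for yb zb xb r
  proof
    show "yb = zb" by (rule cluster_y_eq_z[OF that])
    show "0 \<in> (\<lambda>v. gradF zb + v) ` limiting_subdiff G zb"
      by (rule rev_image_eqI[OF neg_grad_in_limiting_subdiff[OF that]]) simp
  qed
  with iterates_bounded show ?thesis by blast
qed

end
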